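(* Let $G$ be a very well-covered graph with $2h$ vertices and let $e\in E(G)$. If the ideal $(I(G)^2:e)$ is squarefree, then the graph $G'$ whose edge ideal is $(I(G)^2:e)$ is very well-covered.
   Context: $I(G)=(uv\mid\{u,v\}\in E(G))\subseteq K[V(G)]$ is the edge ideal; the edge $e=\{a,b\}$ is identified with the monomial $ab$. The ideal $(I(G)^2:e)$ is generated by quadratic monomials; when it is squarefree it is the edge ideal of a graph $G'$ on the vertex set $V(G)$. $G$ is very well-covered if it has no isolated vertices, all minimal vertex covers have the same size, and this size is $|V(G)|/2$. *)

theory Defs
  imports Main "HOL-Library.Multiset"
begin

definition simple_graph :: "'a set \<Rightarrow> 'a set set \<Rightarrow> bool" where
  "simple_graph V E \<longleftrightarrow> finite V \<and> (\<forall>e\<in>E. e \<subseteq> V \<and> card e = 2)"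

definition vertex_cover :: "'a set \<Rightarrow> 'a set set \<Rightarrow> 'a set \<Rightarrow> bool" where
  "vertex_cover V E C \<longleftrightarrow> C \<subseteq> V \<and> (\<forall>e\<in>E. e \<inter> C \<noteq> {})"

definition minimal_vertex_cover :: "'a set \<Rightarrow> 'a set set \<Rightarrow> 'a set \<Rightarrow> bool" where
  "minimal_vertex_cover V E C \<longleftrightarrow>
     vertex_cover V E C \<and> (\<forall>D. D \<subset> C \<longrightarrow> \<not> vertex_cover V E D)"

definition very_well_covered :: "'a set \<Rightarrow> 'a set set \<Rightarrow> bool" where
  "very_well_covered V E \<longleftrightarrow>
     (\<forall>v\<in>V. \<exists>e\<in>E. v \<in> e) \<and>
     (\<forall>C. minimal_vertex_cover V E C \<longrightarrow> 2 * card C = card V)"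

(* Monomials in K[V] are represented by their exponent multisets over V.
   A monomial ideal is represented by the set of monomials it contains. *)
definition monomials :: "'a set \<Rightarrow> 'a multiset set" where
  "monomials V = {m. set_mset m \<subseteq> V}"

definition mon_ideal :: "'a set \<Rightarrow> 'a multiset set \<Rightarrow> 'a multiset set" where
  "mon_ideal V S = {m \<in> monomials V. \<exists>g\<in>S. g \<subseteq># m}"

definition edge_mon :: "'a set \<Rightarrow> 'a multiset" where
  "edge_mon e = mset_set e"

definition edge_ideal :: "'a set \<Rightarrow> 'a set set \<Rightarrow> 'a multiset set" where
  "edge_ideal V E = mon_ideal V (edge_mon ` E)"

definition edge_ideal_sq :: "'a set \<Rightarrow> 'a set set \<Rightarrow> 'a multiset set" where
  "edge_ideal_sq V E = mon_ideal V {edge_mon e1 + edge_mon e2 | e1 e2. e1 \<in> E \<and> e2 \<in> E}"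

definition mon_colon :: "'a set \<Rightarrow> 'a multiset set \<Rightarrow> 'a multiset \<Rightarrow> 'a multiset set" where
  "mon_colon V J f = {m \<in> monomials V. m + f \<in> J}"

definition min_gens :: "'a multiset set \<Rightarrow> 'a multiset set" where
  "min_gens J = {m \<in> J. \<forall>g\<in>J. g \<subseteq># m \<longrightarrow> g = m}"

definition squarefree_mon_ideal :: "'a multiset set \<Rightarrow> bool" where
  "squarefree_mon_ideal J \<longleftrightarrow> (\<forall>m\<in>min_gens J. \<forall>x. count m x \<le> 1)"

definition ideal_graph_edges :: "'a set \<Rightarrow> 'a multiset set \<Rightarrow> 'a set set" where
  "ideal_graph_edges V J = {{u, v} | u v. u \<in> V \<and> v \<in> V \<and> u \<noteq> v \<and> {#u, v#} \<in> J}"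

end

theory Submission
  imports Defs
begin

text \<open>Write \<open>e = ab\<close>. A squarefree quadratic monomial \<open>uv\<close> lies in \<open>(I(G)\<^sup>2 : ab)\<close> iff \<open>uvab\<close>
  is a product of two edges, i.e. iff \<open>uv\<close> is an edge of \<open>G\<close> or \<open>ua\<close> and \<open>vb\<close> are edges; and
  \<open>z\<^sup>2\<close> would be a minimal generator whenever \<open>z\<close> is adjacent to both \<open>a\<close> and \<open>b\<close>, so
  squarefreeness rules out triangles on \<open>e\<close>. Hence \<open>G \<subseteq> G'\<close>. A minimal vertex cover \<open>C\<close> of
  \<open>G'\<close> cannot contain both \<open>a\<close> and \<open>b\<close>: their private edges in \<open>G'\<close> lie in \<open>G\<close>, and
  their other endpoints \<open>z \<noteq> z'\<close> outside \<open>C\<close> would span an uncovered edge of \<open>G'\<close>. Then every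
  private edge of a vertex of \<open>C\<close> in \<open>G'\<close> yields one in \<open>G\<close>, so \<open>C\<close> is a minimal vertex
  cover of \<open>G\<close> and has \<open>|V|/2\<close> elements.\<close>

lemma add_mset_pair_eq_cases:
  assumes "{#x, y, z#} = add_mset c {#u, v#}"
  shows "x = c \<and> {y, z} = {u, v} \<or> y = c \<and> {x, z} = {u, v} \<or> z = c \<and> {x, y} = {u, v}"
proof -
  have "c \<in># {#x, y, z#}" using assms by simp
  then consider "c = x" | "c = y" | "c = z" by auto
  then show ?thesis
  proof cases
    case 1
    then have "{#y, z#} = {#u, v#}" using assms by simp
    then show ?thesis using 1 by (metis set_mset_add_mset_insert set_mset_single)
  next
    case 2
    then have "{#x, z#} = {#u, v#}" using assms by (simp add: add_mset_commute)
    then show ?thesis using 2 by (metis set_mset_add_mset_insert set_mset_single)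
  next
    case 3
    then have "{#x, y#} = {#u, v#}" using assms by (metis add_mset_commute add_mset_remove_trivial)
    then show ?thesis using 3 by (metis set_mset_add_mset_insert set_mset_single)
  qed
qed

lemma pair_sum_eq_cases:
  assumes "{#p, q#} + {#r, s#} = {#u, v#} + {#a, b#}"
  shows "{u, v} \<in> {{p, q}, {r, s}} \<or> {u, a} \<in> {{p, q}, {r, s}} \<and> {v, b} \<in> {{p, q}, {r, s}}
    \<or> {u, b} \<in> {{p, q}, {r, s}} \<and> {v, a} \<in> {{p, q}, {r, s}}"
proof -
  have sum: "{#p, q, r, s#} = add_mset a (add_mset b {#u, v#})"
    using assms by (simp add: add_mset_commute)
  then have "a \<in># {#p, q, r, s#}" by simp
  then consider "a = p" | "a = q" | "a = r" | "a = s" by auto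
  then show ?thesis
  proof cases
    case 1
    with sum have "{#q, r, s#} = add_mset b {#u, v#}" by simp
    from add_mset_pair_eq_cases[OF this] 1 show ?thesis by (auto simp: doubleton_eq_iff)
  next
    case 2
    have "{#p, q, r, s#} = add_mset q {#p, r, s#}" by (metis add_mset_commute)
    with sum 2 have "{#p, r, s#} = add_mset b {#u, v#}" by simp
    from add_mset_pair_eq_cases[OF this] 2 show ?thesis by (auto simp: doubleton_eq_iff)
  next
    case 3
    have "{#p, q, r, s#} = add_mset r {#p, q, s#}" by (metis add_mset_commute)
    with sum 3 have "{#p, q, s#} = add_mset b {#u, v#}" by simp
    from add_mset_pair_eq_cases[OF this] 3 show ?thesis by (auto simp: doubleton_eq_iff)
  next
    case 4
    have "{#p, q, r, s#} = add_mset s {#p, q, r#}" by (metis add_mset_commute)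
    with sum 4 have "{#p, q, r#} = add_mset b {#u, v#}" by simp
    from add_mset_pair_eq_cases[OF this] 4 show ?thesis by (auto simp: doubleton_eq_iff)
  qed
qed

lemma edge_mon_doubleton: "x \<noteq> y \<Longrightarrow> edge_mon {x, y} = {#x, y#}"
  by (simp add: edge_mon_def)

lemma subset_mset_size_eq: "A \<subseteq># B \<Longrightarrow> size A = size B \<Longrightarrow> A = B"
  using mset_subset_size subset_mset.le_neq_trans by fastforce

lemma simple_graph_edgeE:
  assumes "simple_graph V E" "f \<in> E"
  obtains x y where "f = {x, y}" "x \<noteq> y" "x \<in> V" "y \<in> V"
proof -
  from assms have "card f = 2" "f \<subseteq> V" by (auto simp: simple_graph_def)
  then show thesis using that unfolding card_2_iff by auto
qed

lemma simple_graph_singleton_notin: "simple_graph V E \<Longrightarrow> {x} \<notin> E"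
  by (auto simp: simple_graph_def)

lemma simple_graph_edge_at:
  assumes "simple_graph V E" "f \<in> E" "c \<in> f"
  obtains z where "f = {c, z}" "z \<noteq> c"
proof -
  obtain x y where "f = {x, y}" "x \<noteq> y" using simple_graph_edgeE[OF assms(1,2)] .
  with assms(3) that show thesis by (auto simp: insert_commute)
qed

lemma minimal_vertex_cover_iff_private_edges:
  "minimal_vertex_cover V E C \<longleftrightarrow> vertex_cover V E C \<and> (\<forall>x\<in>C. \<exists>f\<in>E. f \<inter> (C - {x}) = {})"
proof
  assume min: "minimal_vertex_cover V E C"
  have "\<exists>f\<in>E. f \<inter> (C - {x}) = {}" if "x \<in> C" for x
  proof -
    from that have "C - {x} \<subset> C" by blast
    with min have "\<not> vertex_cover V E (C - {x})" by (simp add: minimal_vertex_cover_def)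
    with min show ?thesis by (auto simp: minimal_vertex_cover_def vertex_cover_def)
  qed
  with min show "vertex_cover V E C \<and> (\<forall>x\<in>C. \<exists>f\<in>E. f \<inter> (C - {x}) = {})"
    by (simp add: minimal_vertex_cover_def)
next
  assume cover: "vertex_cover V E C \<and> (\<forall>x\<in>C. \<exists>f\<in>E. f \<inter> (C - {x}) = {})"
  have "\<not> vertex_cover V E D" if "D \<subset> C" for D
  proof
    assume "vertex_cover V E D"
    from \<open>D \<subset> C\<close> obtain x where "x \<in> C" "D \<subseteq> C - {x}" by blast
    with cover obtain f where "f \<in> E" "f \<inter> D = {}" by blast
    with \<open>vertex_cover V E D\<close> show False by (auto simp: vertex_cover_def)
  qed
  with cover show "minimal_vertex_cover V E C" by (simp add: minimal_vertex_cover_def)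
qed

locale edge_colon =
  fixes V :: "'a set" and E :: "'a set set" and a b :: 'a
  assumes simple: "simple_graph V E" and ab_edge: "{a, b} \<in> E"
begin

definition colon_ideal :: "'a multiset set" where
  "colon_ideal = mon_colon V (edge_ideal_sq V E) {#a, b#}"

definition colon_edges :: "'a set set" where
  "colon_edges = ideal_graph_edges V colon_ideal"

lemma a_neq_b: "a \<noteq> b"
  using simple_graph_singleton_notin[OF simple] ab_edge by auto

lemma a_b_in_V: "a \<in> V" "b \<in> V"
  using simple ab_edge by (auto simp: simple_graph_def)

lemma edge_mon_ab: "edge_mon {a, b} = {#a, b#}"
  using a_neq_b by (rule edge_mon_doubleton)

lemma size_edge_mon: "f \<in> E \<Longrightarrow> size (edge_mon f) = 2"
  using simple by (simp add: simple_graph_def edge_mon_def)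

lemma mem_colon_ideal_iff:
  "m \<in> colon_ideal \<longleftrightarrow>
     set_mset m \<subseteq> V \<and> (\<exists>f\<in>E. \<exists>g\<in>E. edge_mon f + edge_mon g \<subseteq># m + {#a, b#})"
  by (auto simp: colon_ideal_def mon_colon_def edge_ideal_sq_def mon_ideal_def monomials_def
      a_b_in_V)

lemma mem_colon_edges_iff:
  "f \<in> colon_edges \<longleftrightarrow>
     (\<exists>x y. f = {x, y} \<and> x \<noteq> y \<and> x \<in> V \<and> y \<in> V \<and> {#x, y#} \<in> colon_ideal)"
  by (auto simp: colon_edges_def ideal_graph_edges_def)

lemma two_le_size_colon_ideal: "m \<in> colon_ideal \<Longrightarrow> 2 \<le> size m"
proof -
  assume "m \<in> colon_ideal"
  then obtain f g where "f \<in> E" "g \<in> E" "edge_mon f + edge_mon g \<subseteq># m + {#a, b#}"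
    by (auto simp: mem_colon_ideal_iff)
  then show "2 \<le> size m"
    using size_mset_mono[of "edge_mon f + edge_mon g"] size_edge_mon by fastforce
qed

lemma pair_in_colon_ideal:
  assumes "x \<in> V" "y \<in> V" "f \<in> E" "g \<in> E" "edge_mon f + edge_mon g = {#x, y#} + {#a, b#}"
  shows "{#x, y#} \<in> colon_ideal"
proof -
  have "edge_mon f + edge_mon g \<subseteq># {#x, y#} + {#a, b#}" using assms(5) by simp
  with assms(1-4) show ?thesis unfolding mem_colon_ideal_iff by auto
qed

lemma edges_subset_colon_edges: "E \<subseteq> colon_edges"
proof
  fix f assume "f \<in> E"
  then obtain x y where xy: "f = {x, y}" "x \<noteq> y" "x \<in> V" "y \<in> V"
    by (rule simple_graph_edgeE[OF simple])
  then have "{#x, y#} \<in> colon_ideal"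
    using \<open>f \<in> E\<close> ab_edge
    by (intro pair_in_colon_ideal[of x y f "{a, b}"]) (simp_all add: edge_mon_doubleton edge_mon_ab)
  with xy show "f \<in> colon_edges" by (auto simp: mem_colon_edges_iff)
qed

lemma path_colon_edge:
  assumes "u \<noteq> v" "{u, a} \<in> E" "{v, b} \<in> E"
  shows "{u, v} \<in> colon_edges"
proof -
  have "u \<noteq> a" "v \<noteq> b" "u \<in> V" "v \<in> V"
    using assms simple_graph_singleton_notin[OF simple] simple
    by (auto simp: simple_graph_def)
  then have "{#u, v#} \<in> colon_ideal"
    using assms by (intro pair_in_colon_ideal[of u v "{u, a}" "{v, b}"])
      (simp_all add: edge_mon_doubleton add_mset_commute)
  with assms \<open>u \<in> V\<close> \<open>v \<in> V\<close> show ?thesis by (auto simp: mem_colon_edges_iff)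
qed

lemma colon_edgeE:
  assumes "f \<in> colon_edges"
  obtains x y where "f = {x, y}" "f \<in> E \<or> {x, a} \<in> E \<and> {y, b} \<in> E"
proof -
  from assms obtain u v where uv: "f = {u, v}" "{#u, v#} \<in> colon_ideal"
    by (auto simp: mem_colon_edges_iff)
  then obtain g h where gh: "g \<in> E" "h \<in> E" "edge_mon g + edge_mon h \<subseteq># {#u, v#} + {#a, b#}"
    by (auto simp: mem_colon_ideal_iff)
  then have sum: "edge_mon g + edge_mon h = {#u, v#} + {#a, b#}"
    using size_edge_mon by (intro subset_mset_size_eq) auto
  obtain p q where pq: "g = {p, q}" "p \<noteq> q" by (rule simple_graph_edgeE[OF simple gh(1)])
  obtain r s where rs: "h = {r, s}" "r \<noteq> s" by (rule simple_graph_edgeE[OF simple gh(2)])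
  from sum have "{#p, q#} + {#r, s#} = {#u, v#} + {#a, b#}"
    using pq rs by (simp add: edge_mon_doubleton)
  moreover have "{{p, q}, {r, s}} = {g, h}" using pq rs by simp
  ultimately consider "{u, v} \<in> {g, h}" | "{u, a} \<in> {g, h}" "{v, b} \<in> {g, h}"
    | "{u, b} \<in> {g, h}" "{v, a} \<in> {g, h}"
    using pair_sum_eq_cases by metis
  then show thesis
  proof cases
    case 1
    with gh uv(1) have "f \<in> E" by auto
    with uv(1) show thesis by (intro that) auto
  next
    case 2
    with gh have "{u, a} \<in> E" "{v, b} \<in> E" by auto
    with uv(1) show thesis by (intro that) auto
  next
    case 3
    with gh have "{v, a} \<in> E" "{u, b} \<in> E" by auto
    moreover from uv(1) have "f = {v, u}" by (simp add: insert_commute)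
    ultimately show thesis by (intro that) auto
  qed
qed

lemma colon_edge_at_a_or_b:
  assumes "f \<in> colon_edges" "c \<in> f" "c \<in> {a, b}"
  shows "f \<in> E"
proof -
  obtain x y where "f = {x, y}" "f \<in> E \<or> {x, a} \<in> E \<and> {y, b} \<in> E"
    using assms(1) by (rule colon_edgeE)
  with assms(2,3) simple_graph_singleton_notin[OF simple] show ?thesis
    by (auto simp: insert_commute)
qed

lemma no_common_neighbour:
  assumes "squarefree_mon_ideal colon_ideal" "{z, a} \<in> E" "{z, b} \<in> E"
  shows False
proof -
  have "z \<noteq> a" "z \<noteq> b" "z \<in> V"
    using assms(2,3) simple_graph_singleton_notin[OF simple] simple by (auto simp: simple_graph_def)
  then have zz: "{#z, z#} \<in> colon_ideal"
    using assms(2,3) by (intro pair_in_colon_ideal[of z z "{z, a}" "{z, b}"])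
      (simp_all add: edge_mon_doubleton add_mset_commute)
  have "{#z, z#} \<in> min_gens colon_ideal"
    unfolding min_gens_def
  proof (intro CollectI conjI ballI impI zz)
    fix g assume "g \<in> colon_ideal" "g \<subseteq># {#z, z#}"
    moreover from this have "size g = size {#z, z#}"
      using two_le_size_colon_ideal size_mset_mono by fastforce
    ultimately show "g = {#z, z#}" by (blast intro: subset_mset_size_eq)
  qed
  with assms(1) have "count {#z, z#} z \<le> 1" unfolding squarefree_mon_ideal_def by blast
  then show False by simp
qed

lemma private_colon_edge_imp_private_edge:
  assumes cover: "\<forall>g\<in>E. g \<inter> C \<noteq> {}" and avoid: "a \<notin> C \<or> b \<notin> C"
    and "f \<in> colon_edges" and excl: "f \<inter> (C - {x}) = {}"
  shows "\<exists>g\<in>E. g \<inter> (C - {x}) = {}"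
proof -
  obtain u v where uv: "f = {u, v}" "f \<in> E \<or> {u, a} \<in> E \<and> {v, b} \<in> E"
    using \<open>f \<in> colon_edges\<close> by (rule colon_edgeE)
  show ?thesis
  proof (cases "f \<in> E")
    case False
    with uv have edges: "{u, a} \<in> E" "{v, b} \<in> E" by auto
    from avoid show ?thesis
    proof
      assume "a \<notin> C"
      moreover have "{u, a} \<inter> C \<noteq> {}" using cover edges(1) by blast
      ultimately have "u \<in> C" by auto
      with excl uv(1) have "u = x" by auto
      with \<open>a \<notin> C\<close> have "{u, a} \<inter> (C - {x}) = {}" by auto
      with edges(1) show ?thesis by blast
    next
      assume "b \<notin> C"
      moreover have "{v, b} \<inter> C \<noteq> {}" using cover edges(2) by blast
      ultimately have "v \<in> C" by auto
      with excl uv(1) have "v = x" by auto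
      with \<open>b \<notin> C\<close> have "{v, b} \<inter> (C - {x}) = {}" by auto
      with edges(2) show ?thesis by blast
    qed
  qed (use excl in auto)
qed

lemma minimal_colon_cover_avoids_a_or_b:
  assumes sqfree: "squarefree_mon_ideal colon_ideal"
    and min: "minimal_vertex_cover V colon_edges C"
  shows "a \<notin> C \<or> b \<notin> C"
proof (rule ccontr)
  have cover: "\<forall>f\<in>colon_edges. f \<inter> C \<noteq> {}"
    using min by (simp add: minimal_vertex_cover_def vertex_cover_def)
  have outside: "\<exists>z. {z, c} \<in> E \<and> z \<notin> C" if "c \<in> C" "c \<in> {a, b}" for c
  proof -
    obtain f where f: "f \<in> colon_edges" "f \<inter> (C - {c}) = {}"
      using min \<open>c \<in> C\<close> by (auto simp: minimal_vertex_cover_iff_private_edges)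
    moreover have "f \<inter> C \<noteq> {}" using cover f(1) by blast
    ultimately have "c \<in> f" by auto
    with f(1) that(2) have "f \<in> E" by (intro colon_edge_at_a_or_b)
    then obtain z where "f = {c, z}" "z \<noteq> c"
      using \<open>c \<in> f\<close> by (rule simple_graph_edge_at[OF simple])
    with f \<open>f \<in> E\<close> show ?thesis by (auto simp: insert_commute)
  qed
  assume "\<not> (a \<notin> C \<or> b \<notin> C)"
  then obtain z z' where z: "{z, a} \<in> E" "z \<notin> C" and z': "{z', b} \<in> E" "z' \<notin> C"
    using outside[of a] outside[of b] by auto
  have "z \<noteq> z'" using no_common_neighbour[OF sqfree] z z' by blast
  then have "{z, z'} \<in> colon_edges" using z z' by (intro path_colon_edge)
  with cover have "{z, z'} \<inter> C \<noteq> {}" by blast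
  with z(2) z'(2) show False by auto
qed

lemma minimal_colon_cover_imp_minimal_cover:
  assumes "squarefree_mon_ideal colon_ideal" "minimal_vertex_cover V colon_edges C"
  shows "minimal_vertex_cover V E C"
proof -
  have cover: "vertex_cover V E C"
    using assms(2) edges_subset_colon_edges by (auto simp: minimal_vertex_cover_def vertex_cover_def)
  have "\<exists>g\<in>E. g \<inter> (C - {x}) = {}" if "x \<in> C" for x
  proof -
    obtain f where "f \<in> colon_edges" "f \<inter> (C - {x}) = {}"
      using assms(2) \<open>x \<in> C\<close> by (auto simp: minimal_vertex_cover_iff_private_edges)
    with cover minimal_colon_cover_avoids_a_or_b[OF assms] show ?thesis
      by (intro private_colon_edge_imp_private_edge) (auto simp: vertex_cover_def)
  qed
  with cover show ?thesis by (simp add: minimal_vertex_cover_iff_private_edges)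
qed

lemma very_well_covered_colon_edges:
  assumes "squarefree_mon_ideal colon_ideal" "very_well_covered V E"
  shows "very_well_covered V colon_edges"
  using assms edges_subset_colon_edges minimal_colon_cover_imp_minimal_cover
  unfolding very_well_covered_def by blast

end

theorem theorem3p6:
  fixes V :: "'a set" and E :: "'a set set" and h :: nat and e :: "'a set"
  assumes "simple_graph V E"
    and "very_well_covered V E"
    and "card V = 2 * h"
    and "e \<in> E"
    and "squarefree_mon_ideal (mon_colon V (edge_ideal_sq V E) (edge_mon e))"
  shows "very_well_covered V
           (ideal_graph_edges V (mon_colon V (edge_ideal_sq V E) (edge_mon e)))"
proof -
  obtain a b where "e = {a, b}"
    using simple_graph_edgeE[OF assms(1,4)] by metis
  with assms(1,4) interpret edge_colon V E a b
    by unfold_locales simp_all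
  have "mon_colon V (edge_ideal_sq V E) (edge_mon e) = colon_ideal"
    using \<open>e = {a, b}\<close> by (simp add: colon_ideal_def edge_mon_ab)
  with assms(2,5) show ?thesis
    using very_well_covered_colon_edges by (simp add: colon_edges_def)
qed

end
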